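(* Let $\Theta$ be a set and $(f_\theta)_{\theta\in\Theta}$ a family of stable mappings $(0,\infty)\to(0,\infty)$ such that $\sup_\theta f_\theta$ and $\inf_\theta f_\theta$ take values in $(0,\infty)$. Then $\sup_{\theta\in\Theta}f_\theta$ and $\inf_{\theta\in\Theta}f_\theta$ are both stable.
   Context: A function $f:(0,\infty)\to(0,\infty)$ is stable if $|f(x)-f(y)|\le\sqrt{\frac{f(x)f(y)}{xy}}|x-y|$ for all $x,y>0$. *)

theory Defs
  imports "HOL-Analysis.Analysis"
begin

text \<open>A function f : (0,\<infinity>) \<rightarrow> (0,\<infinity>) is stable if
  |f x - f y| \<le> sqrt (f x * f y / (x * y)) * |x - y| for all x, y > 0.
  Functions are represented as real \<Rightarrow> real; only their values on (0,\<infinity>) matter.\<close>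
definition stable :: "(real \<Rightarrow> real) \<Rightarrow> bool" where
  "stable f \<longleftrightarrow> (\<forall>x>0. f x > 0) \<and>
     (\<forall>x>0. \<forall>y>0. \<bar>f x - f y\<bar> \<le> sqrt (f x * f y / (x * y)) * \<bar>x - y\<bar>)"

end

theory Submission
  imports Defs
begin

text \<open>Squaring shows that stability of f at a pair x, y > 0 is the condition
  (x f x - y f y) (y f x - x f y) \<le> 0, i.e. f x min(x,y) \<le> f y max(x,y) and symmetrically.
  Each of these inequalities is linear in the values of f with nonnegative coefficients,
  so it passes to pointwise suprema and infima of a family.\<close>

lemma abs_diff_le_sqrt_iff:
  fixes a b x y :: real
  assumes "a > 0" "b > 0" "x > 0" "y > 0"
  shows "\<bar>a - b\<bar> \<le> sqrt (a * b / (x * y)) * \<bar>x - y\<bar> \<longleftrightarrow> (a * x - b * y) * (a * y - b * x) \<le> 0"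
proof -
  have "sqrt (a * b / (x * y)) * \<bar>x - y\<bar> = sqrt (a * b / (x * y) * (x - y)\<^sup>2)"
    by (simp only: real_sqrt_mult real_sqrt_abs)
  moreover have "a * b / (x * y) * (x - y)\<^sup>2 \<ge> 0"
    using assms by simp
  ultimately have "\<bar>a - b\<bar> \<le> sqrt (a * b / (x * y)) * \<bar>x - y\<bar> \<longleftrightarrow> (a - b)\<^sup>2 \<le> a * b / (x * y) * (x - y)\<^sup>2"
    by (metis abs_ge_zero real_sqrt_abs real_sqrt_le_iff real_sqrt_le_mono power2_abs
        real_le_rsqrt)
  also have "\<dots> \<longleftrightarrow> x * y * (a - b)\<^sup>2 \<le> a * b * (x - y)\<^sup>2"
    using assms by (simp add: field_simps)
  also have "\<dots> \<longleftrightarrow> (a * x - b * y) * (a * y - b * x) \<le> 0"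
    by (simp add: power2_eq_square algebra_simps)
  finally show ?thesis .
qed

lemma cross_product_nonpos_iff:
  fixes a b x y :: real
  assumes "a + b \<ge> 0"
  shows "(a * x - b * y) * (a * y - b * x) \<le> 0 \<longleftrightarrow>
    a * min x y \<le> b * max x y \<and> b * min x y \<le> a * max x y"
proof (cases x y rule: le_cases)
  case le
  have "(a * y - b * x) - (a * x - b * y) = (a + b) * (y - x)"
    by (simp add: algebra_simps)
  with assms le have "a * x - b * y \<le> a * y - b * x"
    by (metis diff_ge_0_iff_ge mult_nonneg_nonneg)
  then show ?thesis
    using le by (auto simp: mult_le_0_iff)
next
  case ge
  have "(a * x - b * y) - (a * y - b * x) = (a + b) * (x - y)"
    by (simp add: algebra_simps)
  with assms ge have "a * y - b * x \<le> a * x - b * y"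
    by (metis diff_ge_0_iff_ge mult_nonneg_nonneg)
  then show ?thesis
    using ge by (auto simp: mult_le_0_iff)
qed

lemma stable_iff_min_max:
  "stable f \<longleftrightarrow> (\<forall>x>0. f x > 0) \<and> (\<forall>x>0. \<forall>y>0. f x * min x y \<le> f y * max x y)"
proof -
  have "\<bar>f x - f y\<bar> \<le> sqrt (f x * f y / (x * y)) * \<bar>x - y\<bar> \<longleftrightarrow>
      f x * min x y \<le> f y * max x y \<and> f y * min x y \<le> f x * max x y"
    if "\<forall>x>0. f x > 0" "x > 0" "y > 0" for x y
    using that by (simp add: abs_diff_le_sqrt_iff cross_product_nonpos_iff add_pos_pos less_imp_le)
  then show ?thesis
    unfolding stable_def by (metis min.commute max.commute)
qed

lemma cSUP_mult_right_le:
  fixes g h :: "'i \<Rightarrow> real"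
  assumes "I \<noteq> {}" "bdd_above (h ` I)" "c > 0" "d \<ge> 0"
    and "\<And>i. i \<in> I \<Longrightarrow> g i * c \<le> h i * d"
  shows "(SUP i\<in>I. g i) * c \<le> (SUP i\<in>I. h i) * d"
proof -
  have "(SUP i\<in>I. g i) \<le> (SUP i\<in>I. h i) * d / c"
  proof (rule cSUP_least[OF \<open>I \<noteq> {}\<close>])
    fix i assume "i \<in> I"
    have "g i * c \<le> h i * d" using assms(5)[OF \<open>i \<in> I\<close>] .
    also have "\<dots> \<le> (SUP i\<in>I. h i) * d"
      using cSUP_upper[OF \<open>i \<in> I\<close> assms(2)] \<open>d \<ge> 0\<close> by (rule mult_right_mono)
    finally show "g i \<le> (SUP i\<in>I. h i) * d / c"
      using \<open>c > 0\<close> by (simp add: pos_le_divide_eq)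
  qed
  then show ?thesis
    using \<open>c > 0\<close> by (simp add: pos_le_divide_eq)
qed

lemma cINF_mult_right_le:
  fixes g h :: "'i \<Rightarrow> real"
  assumes "I \<noteq> {}" "bdd_below (g ` I)" "c \<ge> 0" "d > 0"
    and "\<And>i. i \<in> I \<Longrightarrow> g i * c \<le> h i * d"
  shows "(INF i\<in>I. g i) * c \<le> (INF i\<in>I. h i) * d"
proof -
  have "(INF i\<in>I. g i) * c / d \<le> (INF i\<in>I. h i)"
  proof (rule cINF_greatest[OF \<open>I \<noteq> {}\<close>])
    fix i assume "i \<in> I"
    have "(INF i\<in>I. g i) * c \<le> g i * c"
      using cINF_lower[OF assms(2) \<open>i \<in> I\<close>] \<open>c \<ge> 0\<close> by (rule mult_right_mono)
    also have "\<dots> \<le> h i * d" using assms(5)[OF \<open>i \<in> I\<close>] .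
    finally show "(INF i\<in>I. g i) * c / d \<le> h i"
      using \<open>d > 0\<close> by (simp add: pos_divide_le_eq)
  qed
  then show ?thesis
    using \<open>d > 0\<close> by (simp add: pos_divide_le_eq)
qed

lemma stable_SUP:
  fixes f :: "'i \<Rightarrow> real \<Rightarrow> real"
  assumes "\<Theta> \<noteq> {}" "\<And>\<theta>. \<theta> \<in> \<Theta> \<Longrightarrow> stable (f \<theta>)"
    and bdd: "\<And>x. x > 0 \<Longrightarrow> bdd_above ((\<lambda>\<theta>. f \<theta> x) ` \<Theta>)"
  shows "stable (\<lambda>x. SUP \<theta>\<in>\<Theta>. f \<theta> x)"
  unfolding stable_iff_min_max
proof (intro conjI allI impI)
  fix x :: real assume "x > 0"
  obtain \<theta> where "\<theta> \<in> \<Theta>" using \<open>\<Theta> \<noteq> {}\<close> by blast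
  have "0 < f \<theta> x"
    using assms(2)[OF \<open>\<theta> \<in> \<Theta>\<close>] \<open>x > 0\<close> by (simp add: stable_def)
  also have "\<dots> \<le> (SUP \<theta>\<in>\<Theta>. f \<theta> x)"
    using \<open>\<theta> \<in> \<Theta>\<close> bdd[OF \<open>x > 0\<close>] by (rule cSUP_upper)
  finally show "(SUP \<theta>\<in>\<Theta>. f \<theta> x) > 0" .
next
  fix x y :: real assume "x > 0" "y > 0"
  with assms show "(SUP \<theta>\<in>\<Theta>. f \<theta> x) * min x y \<le> (SUP \<theta>\<in>\<Theta>. f \<theta> y) * max x y"
    by (intro cSUP_mult_right_le) (auto simp: stable_iff_min_max)
qed

lemma stable_INF:
  fixes f :: "'i \<Rightarrow> real \<Rightarrow> real"
  assumes "\<Theta> \<noteq> {}" "\<And>\<theta>. \<theta> \<in> \<Theta> \<Longrightarrow> stable (f \<theta>)"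
    and "\<And>x. x > 0 \<Longrightarrow> (INF \<theta>\<in>\<Theta>. f \<theta> x) > 0"
  shows "stable (\<lambda>x. INF \<theta>\<in>\<Theta>. f \<theta> x)"
  unfolding stable_iff_min_max
proof (intro conjI allI impI)
  fix x y :: real assume "x > 0" "y > 0"
  have "bdd_below ((\<lambda>\<theta>. f \<theta> x) ` \<Theta>)"
    using assms(2) \<open>x > 0\<close> by (intro bdd_belowI2[where m = 0]) (auto simp: stable_def less_imp_le)
  with assms \<open>x > 0\<close> \<open>y > 0\<close>
  show "(INF \<theta>\<in>\<Theta>. f \<theta> x) * min x y \<le> (INF \<theta>\<in>\<Theta>. f \<theta> y) * max x y"
    by (intro cINF_mult_right_le) (auto simp: stable_iff_min_max)
qed (use assms(3) in blast)

theorem corollary1: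
  fixes \<Theta> :: "'i set" and f :: "'i \<Rightarrow> real \<Rightarrow> real"
  assumes ne: "\<Theta> \<noteq> {}"
    and st: "\<And>\<theta>. \<theta> \<in> \<Theta> \<Longrightarrow> stable (f \<theta>)"
    and bdd: "\<And>x. x > 0 \<Longrightarrow> bdd_above ((\<lambda>\<theta>. f \<theta> x) ` \<Theta>)"
    and infpos: "\<And>x. x > 0 \<Longrightarrow> (INF \<theta>\<in>\<Theta>. f \<theta> x) > 0"
  shows "stable (\<lambda>x. SUP \<theta>\<in>\<Theta>. f \<theta> x) \<and> stable (\<lambda>x. INF \<theta>\<in>\<Theta>. f \<theta> x)"
  using stable_SUP[OF ne st bdd] stable_INF[OF ne st infpos] by blast

end
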